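(* Let $\varepsilon>0$ and let $q$ be an $\varepsilon$-near square quadrilateral. If one side of $q$ has length $1$, then the length $L$ of each side adjacent to it satisfies $$\tan\!\left(\tfrac{\pi}{4}-\varepsilon\right)\cos(2\varepsilon)\ \le\ L\ \le\ \frac{\tan\left(\frac{\pi}{4}+\varepsilon\right)}{\cos(2\varepsilon)}.$$
   Context: A quadrilateral is cut by a diagonal into two triangles. Its parameters $(a_1,a_2,a_3,a_4)$ are the four angles that the diagonal makes with the four sides (the angles of the two triangles at the endpoints of the diagonal). The quadrilateral is $\varepsilon$-near square if $|a_i-\pi/4|<\varepsilon$ for all $i$. *)

theory Defs
  imports "HOL-Analysis.Analysis"
begin

definition vangle :: "complex \<Rightarrow> complex \<Rightarrow> real" where
  "vangle u v = arccos ((u \<bullet> v) / (norm u * norm v))"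

definition ang :: "complex \<Rightarrow> complex \<Rightarrow> complex \<Rightarrow> real" where
  "ang P Q R = vangle (P - Q) (R - Q)"

definition cross2 :: "complex \<Rightarrow> complex \<Rightarrow> real" where
  "cross2 u v = Im (cnj u * v)"

text \<open>ABCD is a quadrilateral cut by the diagonal AC into two (nondegenerate)
  triangles ABC and ACD: B and D lie strictly on opposite sides of the line AC.\<close>
definition diag_quad :: "complex \<Rightarrow> complex \<Rightarrow> complex \<Rightarrow> complex \<Rightarrow> bool" where
  "diag_quad A B C D \<longleftrightarrow> cross2 (C - A) (B - A) * cross2 (C - A) (D - A) < 0"

text \<open>The parameters (a1,a2,a3,a4): the angles the diagonal AC makes with the four sides.\<close>
definition quad_params :: "complex \<Rightarrow> complex \<Rightarrow> complex \<Rightarrow> complex \<Rightarrow> real list" where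
  "quad_params A B C D = [ang B A C, ang A C B, ang C A D, ang A C D]"

definition near_square :: "real \<Rightarrow> complex \<Rightarrow> complex \<Rightarrow> complex \<Rightarrow> complex \<Rightarrow> bool" where
  "near_square \<epsilon> A B C D \<longleftrightarrow>
     diag_quad A B C D \<and> (\<forall>a \<in> set (quad_params A B C D). \<bar>a - pi / 4\<bar> < \<epsilon>)"

text \<open>Side i (i = 0..3) is the segment from vertex i to vertex i+1 (mod 4);
  sides i and (i+1) mod 4, (i+3) mod 4 are adjacent.\<close>
definition side :: "complex \<Rightarrow> complex \<Rightarrow> complex \<Rightarrow> complex \<Rightarrow> nat \<Rightarrow> real" where
  "side A B C D i = dist ([A, B, C, D] ! (i mod 4)) ([A, B, C, D] ! (Suc i mod 4))"

end

theory Submission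
  imports Defs
begin

text \<open>Within each of the triangles ABC and ACD the law of sines expresses every side of the
  quadrilateral as |AC| sin x / sin (y + z), where x, y, z are parameters of the
  quadrilateral. Hence the ratio of any two sides is (sin x / sin x') (sin (y' + z') / sin (y + z)).
  For parameters within \<epsilon> of \<pi>/4 the first factor lies between tan (\<pi>/4 - \<epsilon>) and tan (\<pi>/4 + \<epsilon>),
  and the sines of sums lie between cos (2\<epsilon>) and 1, so the second factor lies between cos (2\<epsilon>)
  and 1 / cos (2\<epsilon>).\<close>

lemma cross2_sq_plus_inner_sq: "(u \<bullet> v)\<^sup>2 + (cross2 u v)\<^sup>2 = (norm u * norm v)\<^sup>2"
proof -
  have "(norm u * norm v)\<^sup>2 = ((Re u)\<^sup>2 + (Im u)\<^sup>2) * ((Re v)\<^sup>2 + (Im v)\<^sup>2)"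
    by (simp add: power_mult_distrib cmod_power2)
  thus ?thesis by (simp add: cross2_def inner_complex_def power2_eq_square algebra_simps)
qed

lemma vangle_sym: "vangle u v = vangle v u"
  by (simp add: vangle_def inner_commute mult.commute)

lemma ang_sym: "ang P Q R = ang R Q P"
  by (simp add: ang_def vangle_sym)

lemma vangle_cos_bounds:
  assumes "u \<noteq> 0" "v \<noteq> 0"
  shows "-1 \<le> (u \<bullet> v) / (norm u * norm v)" "(u \<bullet> v) / (norm u * norm v) \<le> 1"
proof -
  have "\<bar>u \<bullet> v\<bar> \<le> norm u * norm v" by (rule Cauchy_Schwarz_ineq2)
  thus "-1 \<le> (u \<bullet> v) / (norm u * norm v)" "(u \<bullet> v) / (norm u * norm v) \<le> 1"
    using assms by (auto simp: divide_simps abs_le_iff)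
qed

lemma norm_mult_cos_vangle:
  assumes "u \<noteq> 0" "v \<noteq> 0"
  shows "norm u * norm v * cos (vangle u v) = u \<bullet> v"
  using assms vangle_cos_bounds[OF assms] by (simp add: vangle_def cos_arccos)

lemma norm_mult_sin_vangle:
  assumes "u \<noteq> 0" "v \<noteq> 0"
  shows "norm u * norm v * sin (vangle u v) = \<bar>cross2 u v\<bar>"
proof -
  define N where "N = norm u * norm v"
  have N: "N > 0" using assms by (simp add: N_def)
  have "sin (vangle u v) = sqrt (1 - ((u \<bullet> v) / N)\<^sup>2)"
    using vangle_cos_bounds[OF assms] by (simp add: vangle_def sin_arccos N_def)
  also have "1 - ((u \<bullet> v) / N)\<^sup>2 = (cross2 u v / N)\<^sup>2"
  proof -
    have N2: "N\<^sup>2 = (u \<bullet> v)\<^sup>2 + (cross2 u v)\<^sup>2" using cross2_sq_plus_inner_sq[of u v] by (simp add: N_def)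
    have "1 - ((u \<bullet> v) / N)\<^sup>2 = (N\<^sup>2 - (u \<bullet> v)\<^sup>2) / N\<^sup>2"
      using N by (simp add: power_divide diff_divide_distrib)
    also have "\<dots> = (cross2 u v / N)\<^sup>2" unfolding power_divide by (subst N2) simp
    finally show ?thesis .
  qed
  also have "sqrt \<dots> = \<bar>cross2 u v\<bar> / N"
    using N by (simp add: real_sqrt_abs)
  finally have "N * sin (vangle u v) = \<bar>cross2 u v\<bar>" using N by simp
  thus ?thesis by (simp add: N_def)
qed

text \<open>Law of sines in the triangle PQR, whose angle at Q is \<pi> - (\<alpha> + \<beta>). Distinct vertices
  suffice: for collinear points both sides vanish.\<close>
lemma law_of_sines:
  assumes "P \<noteq> R" "Q \<noteq> P" "Q \<noteq> R"
  defines "\<alpha> \<equiv> ang Q P R" and "\<beta> \<equiv> ang P R Q"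
  shows "dist Q R * sin (\<alpha> + \<beta>) = dist P R * sin \<alpha>"
proof -
  have ne: "Q - P \<noteq> 0" "R - P \<noteq> 0" "Q - R \<noteq> 0" "P - R \<noteq> 0" using assms(1-3) by auto
  have dPR: "dist P R = norm (R - P)" "norm (P - R) = norm (R - P)"
    by (simp_all add: dist_norm norm_minus_commute)
  have pos: "norm (R - P) > 0" using ne by simp
  have height: "norm (Q - P) * sin \<alpha> = norm (Q - R) * sin \<beta>"
  proof -
    have "\<bar>cross2 (Q - P) (R - P)\<bar> = \<bar>cross2 (P - R) (Q - R)\<bar>"
      by (simp add: cross2_def algebra_simps abs_minus_commute)
    hence "norm (R - P) * (norm (Q - P) * sin \<alpha>) = norm (R - P) * (norm (Q - R) * sin \<beta>)"
      using norm_mult_sin_vangle[of "Q - P" "R - P"] norm_mult_sin_vangle[of "P - R" "Q - R"] ne dPR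
      unfolding \<alpha>_def \<beta>_def ang_def by (simp add: ac_simps)
    thus ?thesis using pos by simp
  qed
  have projection: "norm (Q - P) * cos \<alpha> + norm (Q - R) * cos \<beta> = norm (R - P)"
  proof -
    have "(Q - P) \<bullet> (R - P) + (P - R) \<bullet> (Q - R) = (norm (R - P))\<^sup>2"
      unfolding cmod_power2 by (simp add: inner_complex_def algebra_simps power2_eq_square)
    hence "norm (R - P) * (norm (Q - P) * cos \<alpha> + norm (Q - R) * cos \<beta>) = norm (R - P) * norm (R - P)"
      using norm_mult_cos_vangle[of "Q - P" "R - P"] norm_mult_cos_vangle[of "P - R" "Q - R"] ne dPR
      unfolding \<alpha>_def \<beta>_def ang_def by (simp add: algebra_simps power2_eq_square)
    thus ?thesis using pos by simp
  qed
  have "norm (Q - R) * sin (\<alpha> + \<beta>) = sin \<alpha> * (norm (Q - R) * cos \<beta>) + cos \<alpha> * (norm (Q - R) * sin \<beta>)"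
    by (simp add: sin_add algebra_simps)
  also have "\<dots> = sin \<alpha> * (norm (Q - P) * cos \<alpha> + norm (Q - R) * cos \<beta>)"
    using height by (simp add: algebra_simps)
  finally show ?thesis using projection dPR by (simp add: dist_norm)
qed

lemma cross2_nonzero_imp_distinct:
  assumes "cross2 (C - A) (B - A) \<noteq> 0"
  shows "A \<noteq> C" "B \<noteq> A" "B \<noteq> C"
  using assms by (auto simp: cross2_def algebra_simps)

lemma diag_quad_distinct:
  assumes "diag_quad A B C D"
  shows "A \<noteq> C" "B \<noteq> A" "B \<noteq> C" "D \<noteq> A" "D \<noteq> C"
proof -
  have "cross2 (C - A) (B - A) \<noteq> 0" "cross2 (C - A) (D - A) \<noteq> 0"
    using assms unfolding diag_quad_def by auto
  thus "A \<noteq> C" "B \<noteq> A" "B \<noteq> C" "D \<noteq> A" "D \<noteq> C"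
    using cross2_nonzero_imp_distinct by blast+
qed

lemma diag_quad_side_law_of_sines:
  assumes "diag_quad A B C D"
  defines "as \<equiv> set (quad_params A B C D)"
  shows "\<exists>x \<in> as. \<exists>y \<in> as. \<exists>z \<in> as. side A B C D k * sin (y + z) = dist A C * sin x"
proof -
  note ne = diag_quad_distinct[OF assms(1)]
  define a1 a2 a3 a4 where "a1 = ang B A C" "a2 = ang A C B" "a3 = ang C A D" "a4 = ang A C D"
  have params: "a1 \<in> as" "a2 \<in> as" "a3 \<in> as" "a4 \<in> as"
    by (simp_all add: as_def quad_params_def a1_a2_a3_a4_def)
  have "dist B A * sin (ang B C A + ang C A B) = dist C A * sin (ang B C A)"
    using ne by (intro law_of_sines) auto
  hence side0: "side A B C D 0 * sin (a2 + a1) = dist A C * sin a2"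
    by (simp add: side_def a1_a2_a3_a4_def dist_commute ang_sym[of B C A] ang_sym[of C A B])
  have "dist B C * sin (ang B A C + ang A C B) = dist A C * sin (ang B A C)"
    using ne by (intro law_of_sines) auto
  hence side1: "side A B C D 1 * sin (a1 + a2) = dist A C * sin a1"
    by (simp add: side_def a1_a2_a3_a4_def)
  have "dist D C * sin (ang D A C + ang A C D) = dist A C * sin (ang D A C)"
    using ne by (intro law_of_sines) auto
  hence side2: "side A B C D 2 * sin (a3 + a4) = dist A C * sin a3"
    by (simp add: side_def a1_a2_a3_a4_def dist_commute ang_sym[of D A C])
  have "dist D A * sin (ang D C A + ang C A D) = dist C A * sin (ang D C A)"
    using ne by (intro law_of_sines) auto
  hence side3: "side A B C D 3 * sin (a4 + a3) = dist A C * sin a4"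
    by (simp add: side_def a1_a2_a3_a4_def dist_commute ang_sym[of D C A])
  have "side A B C D k = side A B C D (k mod 4)" by (simp add: side_def mod_Suc_eq)
  moreover have "k mod 4 = 0 \<or> k mod 4 = 1 \<or> k mod 4 = 2 \<or> k mod 4 = 3" by linarith
  ultimately show ?thesis using params side0 side1 side2 side3 by fastforce
qed

lemma sin_bounds_near_quarter_pi:
  fixes e x :: real
  assumes "0 < e" "e < pi / 4" "\<bar>x - pi / 4\<bar> < e"
  shows "sin (pi / 4 - e) \<le> sin x" "sin x \<le> sin (pi / 4 + e)" "0 < sin (pi / 4 - e)"
proof -
  show "sin (pi / 4 - e) \<le> sin x" using assms by (subst sin_mono_le_eq) auto
  show "sin x \<le> sin (pi / 4 + e)" using assms by (subst sin_mono_le_eq) auto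
  show "0 < sin (pi / 4 - e)" using assms by (intro sin_gt_zero) auto
qed

lemma sin_add_ge_cos_near_quarter_pi:
  fixes e x y :: real
  assumes "0 < e" "e < pi / 4" "\<bar>x - pi / 4\<bar> < e" "\<bar>y - pi / 4\<bar> < e"
  shows "cos (2 * e) \<le> sin (x + y)" "0 < cos (2 * e)"
proof -
  have "sin (x + y) = cos (x + y - pi / 2)"
    by (simp add: sin_cos_eq cos_minus[of "x + y - pi / 2", symmetric])
  also have "\<dots> = cos \<bar>x + y - pi / 2\<bar>" by (simp only: cos_abs_real)
  finally have "sin (x + y) = cos \<bar>x + y - pi / 2\<bar>" .
  moreover have "cos (2 * e) \<le> cos \<bar>x + y - pi / 2\<bar>"
    using assms by (subst cos_mono_le_eq) auto
  ultimately show "cos (2 * e) \<le> sin (x + y)" by simp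
  show "0 < cos (2 * e)" using assms by (intro cos_gt_zero_pi) auto
qed

lemma sin_ratio_bounds:
  fixes e x y :: real
  assumes e: "0 < e" "e < pi / 4" and "\<bar>x - pi / 4\<bar> < e" "\<bar>y - pi / 4\<bar> < e"
  shows "tan (pi / 4 - e) \<le> sin x / sin y" "sin x / sin y \<le> tan (pi / 4 + e)"
proof -
  note sx = sin_bounds_near_quarter_pi[OF e assms(3)]
  note sy = sin_bounds_near_quarter_pi[OF e assms(4)]
  have tan_eq: "tan (pi / 4 - e) = sin (pi / 4 - e) / sin (pi / 4 + e)"
    "tan (pi / 4 + e) = sin (pi / 4 + e) / sin (pi / 4 - e)"
    by (simp_all add: tan_def cos_sin_eq)
  show "tan (pi / 4 - e) \<le> sin x / sin y" "sin x / sin y \<le> tan (pi / 4 + e)"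
    unfolding tan_eq using sx sy by (intro frac_le; linarith)+
qed

lemma sin_add_ratio_bounds:
  fixes e x y u v :: real
  assumes e: "0 < e" "e < pi / 4"
    and "\<bar>x - pi / 4\<bar> < e" "\<bar>y - pi / 4\<bar> < e" "\<bar>u - pi / 4\<bar> < e" "\<bar>v - pi / 4\<bar> < e"
  shows "cos (2 * e) \<le> sin (x + y) / sin (u + v)" "sin (x + y) / sin (u + v) \<le> 1 / cos (2 * e)"
proof -
  note xy = sin_add_ge_cos_near_quarter_pi[OF e assms(3,4)]
  note uv = sin_add_ge_cos_near_quarter_pi[OF e assms(5,6)]
  have "cos (2 * e) * sin (u + v) \<le> sin (x + y)"
    using xy uv sin_le_one[of "u + v"] by (smt (verit) mult_left_le)
  moreover have "cos (2 * e) * sin (x + y) \<le> sin (u + v)"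
    using xy uv sin_le_one[of "x + y"] by (smt (verit) mult_left_le)
  ultimately show "cos (2 * e) \<le> sin (x + y) / sin (u + v)" "sin (x + y) / sin (u + v) \<le> 1 / cos (2 * e)"
    using xy uv by (simp_all add: field_simps)
qed

lemma sin_quotient_bounds:
  fixes e x y u v z w :: real
  assumes e: "0 < e" "e < pi / 4"
    and "\<bar>x - pi / 4\<bar> < e" "\<bar>y - pi / 4\<bar> < e" "\<bar>u - pi / 4\<bar> < e"
    and "\<bar>v - pi / 4\<bar> < e" "\<bar>z - pi / 4\<bar> < e" "\<bar>w - pi / 4\<bar> < e"
  defines "q \<equiv> (sin x / sin y) * (sin (u + v) / sin (z + w))"
  shows "tan (pi / 4 - e) * cos (2 * e) \<le> q \<and> q \<le> tan (pi / 4 + e) / cos (2 * e)"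
proof -
  note r = sin_ratio_bounds[OF e assms(3,4)]
  note s = sin_add_ratio_bounds[OF e assms(5-8)]
  have "0 < tan (pi / 4 - e)" using e by (intro tan_gt_zero) auto
  moreover have "0 < cos (2 * e)" using sin_add_ge_cos_near_quarter_pi[OF e assms(5,6)] by simp
  ultimately have "tan (pi / 4 - e) * cos (2 * e) \<le> q" "q \<le> tan (pi / 4 + e) * (1 / cos (2 * e))"
    unfolding q_def using r s by (intro mult_mono; linarith)+
  thus ?thesis by simp
qed

theorem lemma3p4p4:
  fixes \<epsilon> :: real and A B C D :: complex and i j :: nat
  assumes "0 < \<epsilon>" and "\<epsilon> < pi / 4"
    and "near_square \<epsilon> A B C D"
    and "i < 4" and "side A B C D i = 1"
    and "j = Suc i mod 4 \<or> j = (i + 3) mod 4"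
  shows "tan (pi / 4 - \<epsilon>) * cos (2 * \<epsilon>) \<le> side A B C D j
       \<and> side A B C D j \<le> tan (pi / 4 + \<epsilon>) / cos (2 * \<epsilon>)"
proof -
  note e = assms(1,2)
  have quad: "diag_quad A B C D" and near: "\<And>a. a \<in> set (quad_params A B C D) \<Longrightarrow> \<bar>a - pi / 4\<bar> < \<epsilon>"
    using assms(3) by (auto simp: near_square_def)
  obtain x y z where xyz: "\<bar>x - pi / 4\<bar> < \<epsilon>" "\<bar>y - pi / 4\<bar> < \<epsilon>" "\<bar>z - pi / 4\<bar> < \<epsilon>"
    and side_i: "side A B C D i * sin (y + z) = dist A C * sin x"
    using diag_quad_side_law_of_sines[OF quad, of i] near by blast
  obtain x' y' z' where xyz': "\<bar>x' - pi / 4\<bar> < \<epsilon>" "\<bar>y' - pi / 4\<bar> < \<epsilon>" "\<bar>z' - pi / 4\<bar> < \<epsilon>"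
    and side_j: "side A B C D j * sin (y' + z') = dist A C * sin x'"
    using diag_quad_side_law_of_sines[OF quad, of j] near by blast
  have "0 < sin x" using sin_bounds_near_quarter_pi[OF e xyz(1)] by linarith
  moreover have "0 < sin (y' + z')" using sin_add_ge_cos_near_quarter_pi[OF e xyz'(2,3)] by linarith
  ultimately have "side A B C D j = (sin x' / sin x) * (sin (y + z) / sin (y' + z'))"
    using side_i side_j assms(5) by (simp add: field_simps)
  thus ?thesis using sin_quotient_bounds[OF e xyz'(1) xyz(1) xyz(2,3) xyz'(2,3)] by simp
qed

end
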